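(* Let $d>0$, let $\ell$ be a certified lower bound with certificate matrix $\Lambda$, and suppose $f(d,\ell)=1$. Suppose $j\in\{1,\dots,m\}$ satisfies $0<a_j^\top y(d,\ell)-u_j\le\gamma_j(d,\ell)$. Define $$\ell^{(1)}:=\ell-\frac{2(t_j(d,\ell)-v_j(\ell))}{d_j\gamma_j(d,\ell)^2}e_j .$$ Then $\ell^{(1)}$ is a certified lower bound with certificate matrix $\Lambda$, $a_j^\top y(d,\ell^{(1)})=u_j$, and $$f(d,\ell^{(1)})=1-\Big(\frac{a_j^\top y(d,\ell)-u_j}{\gamma_j(d,\ell)}\Big)^2<1 .$$
   Context: Standing assumption: $A=[a_1|\cdots|a_m]\in\mathbb{R}^{n\times m}$ has columns of unit Euclidean norm and $\{A\lambda:\lambda\ge0\}=\mathbb{R}^n$; $u\in\mathbb{R}^m$. $D=\mathrm{diag}(d)$; $r(\ell)=\tfrac12(u+\ell)$, $v(\ell)=\tfrac12(u-\ell)$, $B(d)=ADA^\top$, $y(d,\ell)=B(d)^{-1}ADr(\ell)$, $t(d,\ell)=A^\top y(d,\ell)-r(\ell)$, $f(d,\ell)=v(\ell)^\top Dv(\ell)-t(d,\ell)^\top Dt(d,\ell)$, $\gamma_i(d,\ell)=\sqrt{f(d,\ell)a_i^\top B(d)^{-1}a_i}$ when $f(d,\ell)>0$. $\ell$ is a certified lower bound with certificate matrix $\Lambda\in\mathbb{R}^{m\times m}$ if $A\Lambda=-A$, $\Lambda\ge0$, $-\Lambda^\top u\ge\ell$. *)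

theory Defs
  imports "HOL-Analysis.Analysis"
begin

text \<open>Data: A has n rows (index type 'n) and m columns (index type 'm); u, d, l are in R^m.\<close>

definition diagm :: "real^'m \<Rightarrow> real^'m^'m" where
  "diagm d = (\<chi> i j. if i = j then d $ i else 0)"

definition rvec :: "real^'m \<Rightarrow> real^'m \<Rightarrow> real^'m" where
  "rvec u l = (1/2) *\<^sub>R (u + l)"

definition vvec :: "real^'m \<Rightarrow> real^'m \<Rightarrow> real^'m" where
  "vvec u l = (1/2) *\<^sub>R (u - l)"

definition Bmat :: "real^'m^'n \<Rightarrow> real^'m \<Rightarrow> real^'n^'n" where
  "Bmat A d = A ** diagm d ** transpose A"

definition yvec :: "real^'m^'n \<Rightarrow> real^'m \<Rightarrow> real^'m \<Rightarrow> real^'m \<Rightarrow> real^'n" where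
  "yvec A u d l = matrix_inv (Bmat A d) *v (A *v (diagm d *v rvec u l))"

definition tvec :: "real^'m^'n \<Rightarrow> real^'m \<Rightarrow> real^'m \<Rightarrow> real^'m \<Rightarrow> real^'m" where
  "tvec A u d l = transpose A *v yvec A u d l - rvec u l"

definition fval :: "real^'m^'n \<Rightarrow> real^'m \<Rightarrow> real^'m \<Rightarrow> real^'m \<Rightarrow> real" where
  "fval A u d l = vvec u l \<bullet> (diagm d *v vvec u l) - tvec A u d l \<bullet> (diagm d *v tvec A u d l)"

text \<open>gamma_i, meaningful only when f(d,l) > 0.\<close>
definition gam :: "real^'m^'n \<Rightarrow> real^'m \<Rightarrow> real^'m \<Rightarrow> real^'m \<Rightarrow> 'm \<Rightarrow> real" where
  "gam A u d l i = sqrt (fval A u d l * (column i A \<bullet> (matrix_inv (Bmat A d) *v column i A)))"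

definition certified_lb :: "real^'m^'n \<Rightarrow> real^'m \<Rightarrow> real^'m \<Rightarrow> real^'m^'m \<Rightarrow> bool" where
  "certified_lb A u l \<Lambda> \<longleftrightarrow> A ** \<Lambda> = - A \<and> (\<forall>i j. \<Lambda> $ i $ j \<ge> 0)
     \<and> (\<forall>i. (- (transpose \<Lambda> *v u)) $ i \<ge> l $ i)"

end

theory Submission
  imports Defs
begin

text \<open>Only the \<open>j\<close>-th coordinate of \<open>\<ell>\<close> moves, by \<open>-2s\<close>. Then \<open>r\<close> and \<open>v\<close> move by
  \<open>\<mp>s e\<^sub>j\<close>, so \<open>y\<close> moves by \<open>-s d\<^sub>j B\<^sup>-\<^sup>1 a\<^sub>j\<close> and \<open>t\<close> by \<open>s (e\<^sub>j - d\<^sub>j A\<^sup>T B\<^sup>-\<^sup>1 a\<^sub>j)\<close>.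
  Since \<open>A D t = 0\<close> the cross term in \<open>t\<^sup>T D t\<close> vanishes, and \<open>f\<close> becomes the quadratic
  \<open>f - 2 s d\<^sub>j (a\<^sub>j\<^sup>T y - u\<^sub>j) + s\<^sup>2 d\<^sub>j\<^sup>2 a\<^sub>j\<^sup>T B\<^sup>-\<^sup>1 a\<^sub>j\<close> in \<open>s\<close>. For \<open>f = 1\<close> we have
  \<open>\<gamma>\<^sub>j\<^sup>2 = a\<^sub>j\<^sup>T B\<^sup>-\<^sup>1 a\<^sub>j\<close>, and the prescribed step \<open>s = (a\<^sub>j\<^sup>T y - u\<^sub>j) / (d\<^sub>j \<gamma>\<^sub>j\<^sup>2)\<close> is both
  the one that makes \<open>a\<^sub>j\<^sup>T y = u\<^sub>j\<close> and the minimiser of that quadratic. As \<open>s > 0\<close>, the bound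
  only decreases, so \<open>\<Lambda>\<close> still certifies it.\<close>

lemma diagm_mult_vec: "diagm d *v x = (\<chi> i. d $ i * x $ i)"
  unfolding diagm_def matrix_vector_mult_def
  by (simp add: vec_eq_iff mult.commute[of "if _ then _ else _"] mult.commute[of _ "x $ _"]
      if_distrib[of "\<lambda>c. _ * c"] cong: if_cong)

lemma inner_diagm: "x \<bullet> (diagm d *v y) = (\<Sum>i\<in>UNIV. d $ i * x $ i * y $ i)"
  by (simp add: diagm_mult_vec inner_vec_def mult_ac)

lemma inner_diagm_commute: "x \<bullet> (diagm d *v y) = y \<bullet> (diagm d *v x)"
  by (simp add: inner_diagm mult_ac)

lemma inner_diagm_add_scaleR:
  "(x + s *\<^sub>R z) \<bullet> (diagm d *v (x + s *\<^sub>R z)) =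
     x \<bullet> (diagm d *v x) + 2 * s * (x \<bullet> (diagm d *v z)) + s\<^sup>2 * (z \<bullet> (diagm d *v z))"
  by (simp add: inner_diagm power2_eq_square algebra_simps sum.distrib sum_distrib_left)

lemma diagm_mult_axis: "diagm d *v axis j c = axis j (c * d $ j)"
  by (simp add: diagm_mult_vec vec_eq_iff axis_def)

lemma inner_diagm_axis: "x \<bullet> (diagm d *v axis j c) = c * d $ j * x $ j"
  by (simp add: diagm_mult_axis inner_axis)

lemma inner_diagm_eq_0_iff:
  assumes "\<forall>i. d $ i > 0"
  shows "x \<bullet> (diagm d *v x) = 0 \<longleftrightarrow> x = 0"
proof -
  have "\<forall>i\<in>UNIV. 0 \<le> d $ i * x $ i * x $ i"
    using assms by (simp add: mult.assoc less_imp_le)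
  then show ?thesis
    using assms by (auto simp: inner_diagm sum_nonneg_eq_0_iff vec_eq_iff) (metis less_irrefl)
qed

lemma transpose_mult_vec_nth: "(transpose A *v x) $ j = column j A \<bullet> x"
  by (simp add: column_def inner_vec_def matrix_vector_mult_def transpose_def mult.commute)

lemma matrix_inv_mult_vec_right:
  assumes "invertible (M :: 'a::field^'n^'n)"
  shows "M *v (matrix_inv M *v x) = x"
proof -
  have "M ** matrix_inv M = mat 1"
    using assms unfolding invertible_def matrix_inv_def by (rule someI2_ex) blast
  then show ?thesis by (simp add: matrix_vector_mul_assoc)
qed

lemma Bmat_mult_vec: "Bmat A d *v x = A *v (diagm d *v (transpose A *v x))"
  by (simp add: Bmat_def matrix_vector_mul_assoc matrix_mul_assoc del: transpose_matrix_vector)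

lemma inner_Bmat: "x \<bullet> (Bmat A d *v x) = (transpose A *v x) \<bullet> (diagm d *v (transpose A *v x))"
  by (simp add: Bmat_mult_vec dot_lmul_matrix)

lemma invertible_Bmat:
  assumes "\<forall>i. d $ i > 0" and "surj ((*v) A)"
  shows "invertible (Bmat A d)"
  unfolding invertible_left_inverse matrix_left_invertible_ker
proof (intro allI impI)
  fix x assume "Bmat A d *v x = 0"
  then have "transpose A *v x = 0"
    using inner_Bmat[of x A d] inner_diagm_eq_0_iff[OF assms(1)] by simp
  moreover obtain w where "x = A *v w" using assms(2) by blast
  then have "x \<bullet> x = (transpose A *v x) \<bullet> w"
    by (simp add: dot_lmul_matrix)
  ultimately show "x = 0" by simp
qed

lemma inner_matrix_inv_Bmat_pos:
  assumes "\<forall>i. d $ i > 0" and "invertible (Bmat A d)" and "a \<noteq> 0"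
  shows "a \<bullet> (matrix_inv (Bmat A d) *v a) > 0"
proof -
  define h where "h = matrix_inv (Bmat A d) *v a"
  have Bh: "Bmat A d *v h = a"
    unfolding h_def by (rule matrix_inv_mult_vec_right[OF assms(2)])
  then have "a \<bullet> h = (transpose A *v h) \<bullet> (diagm d *v (transpose A *v h))"
    using inner_Bmat[of h A d] by (simp add: inner_commute)
  moreover have "transpose A *v h \<noteq> 0"
    using Bh assms(3) by (auto simp: Bmat_mult_vec)
  ultimately have "a \<bullet> h \<noteq> 0"
    using inner_diagm_eq_0_iff[OF assms(1)] by simp
  moreover have "a \<bullet> h \<ge> 0"
    unfolding \<open>a \<bullet> h = _\<close> inner_diagm using assms(1)
    by (intro sum_nonneg) (simp add: mult.assoc less_imp_le)
  ultimately show ?thesis unfolding h_def by simp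
qed

lemma tvec_minus_vvec_nth: "tvec A u d l $ j - vvec u l $ j = column j A \<bullet> yvec A u d l - u $ j"
  by (simp add: tvec_def rvec_def vvec_def transpose_mult_vec_nth del: transpose_matrix_vector)
    (simp add: algebra_simps)

lemma Bmat_yvec:
  assumes "invertible (Bmat A d)"
  shows "Bmat A d *v yvec A u d l = A *v (diagm d *v rvec u l)"
  unfolding yvec_def by (rule matrix_inv_mult_vec_right[OF assms])

lemma tvec_orthogonal:
  assumes "invertible (Bmat A d)"
  shows "A *v (diagm d *v tvec A u d l) = 0"
  using Bmat_yvec[OF assms, of u l]
  by (simp add: tvec_def Bmat_mult_vec matrix_vector_mult_diff_distrib del: transpose_matrix_vector)

lemma rvec_axis_shift: "rvec u (l - (2 * s) *\<^sub>R axis j 1) = rvec u l - s *\<^sub>R axis j 1"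
  by (simp add: rvec_def algebra_simps)

lemma vvec_axis_shift: "vvec u (l - (2 * s) *\<^sub>R axis j 1) = vvec u l + s *\<^sub>R axis j 1"
  by (simp add: vvec_def algebra_simps)

lemma yvec_axis_shift:
  "yvec A u d (l - (2 * s) *\<^sub>R axis j 1) =
     yvec A u d l - (s * d $ j) *\<^sub>R (matrix_inv (Bmat A d) *v column j A)"
proof -
  have "diagm d *v axis j 1 = d $ j *\<^sub>R axis j 1"
    by (simp add: diagm_mult_vec vec_eq_iff axis_def)
  then have "A *v (diagm d *v axis j 1) = d $ j *\<^sub>R column j A"
    by (simp add: matrix_vector_mult_scaleR matrix_vector_mult_basis)
  then show ?thesis
    by (simp add: yvec_def rvec_axis_shift matrix_vector_mult_diff_distrib matrix_vector_mult_scaleR)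
qed

lemma tvec_axis_shift:
  "tvec A u d (l - (2 * s) *\<^sub>R axis j 1) =
     tvec A u d l + s *\<^sub>R (axis j 1 - d $ j *\<^sub>R (transpose A *v (matrix_inv (Bmat A d) *v column j A)))"
  unfolding tvec_def yvec_axis_shift rvec_axis_shift
  by (simp add: matrix_vector_mult_diff_distrib matrix_vector_mult_scaleR algebra_simps
      del: transpose_matrix_vector)

lemma inner_diagm_tvec_axis_shift:
  fixes A :: "real^'m^'n" and u d l :: "real^'m" and s :: real and j :: 'm
  assumes "invertible (Bmat A d)"
  defines "t \<equiv> tvec A u d l" and "t' \<equiv> tvec A u d (l - (2 * s) *\<^sub>R axis j 1)"
    and "g \<equiv> column j A \<bullet> (matrix_inv (Bmat A d) *v column j A)"
  shows "t' \<bullet> (diagm d *v t') =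
    t \<bullet> (diagm d *v t) + 2 * s * (d $ j * t $ j) + s\<^sup>2 * (d $ j - (d $ j)\<^sup>2 * g)"
proof -
  define D where "D = diagm d"
  define e :: "real^'m" where "e = axis j 1"
  define h where "h = matrix_inv (Bmat A d) *v column j A"
  define p where "p = transpose A *v h"
  have form_e: "x \<bullet> (D *v e) = d $ j * x $ j" for x
    by (simp add: D_def e_def inner_diagm_axis)
  have form_p: "p \<bullet> (D *v p) = g"
    using inner_Bmat[of h A d] matrix_inv_mult_vec_right[OF assms(1)]
    by (simp add: D_def p_def g_def h_def inner_commute)
  have "p $ j = g"
    by (simp only: p_def g_def h_def transpose_mult_vec_nth)
  then have "e \<bullet> (D *v p) = d $ j * g"
    using form_e[of p] inner_diagm_commute[of e d p] by (simp add: D_def)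
  moreover have "e \<bullet> (D *v e) = d $ j"
    using form_e[of e] by (simp add: e_def)
  ultimately have form_dir: "(e + (- d $ j) *\<^sub>R p) \<bullet> (D *v (e + (- d $ j) *\<^sub>R p)) = d $ j - (d $ j)\<^sup>2 * g"
    using form_p unfolding D_def inner_diagm_add_scaleR by (simp add: power2_eq_square)
  have "t \<bullet> (D *v p) = h \<bullet> (A *v (D *v t))"
    by (simp only: D_def p_def inner_diagm_commute[of t] dot_lmul_matrix transpose_matrix_vector)
  then have "t \<bullet> (D *v p) = 0"
    using tvec_orthogonal[OF assms(1), of u l] by (simp add: D_def t_def)
  then have "t \<bullet> (D *v (e + (- d $ j) *\<^sub>R p)) = d $ j * t $ j"
    using form_e[of t] by (simp add: matrix_vector_mult_diff_distrib matrix_vector_mult_scaleR inner_diff_right)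
  moreover have "t' = t + s *\<^sub>R (e + (- d $ j) *\<^sub>R p)"
    by (simp add: t'_def t_def tvec_axis_shift e_def p_def h_def)
  ultimately show ?thesis
    using form_dir by (simp add: D_def inner_diagm_add_scaleR)
qed

lemma inner_diagm_vvec_axis_shift:
  "vvec u (l - (2 * s) *\<^sub>R axis j 1) \<bullet> (diagm d *v vvec u (l - (2 * s) *\<^sub>R axis j 1)) =
     vvec u l \<bullet> (diagm d *v vvec u l) + 2 * s * (d $ j * vvec u l $ j) + s\<^sup>2 * d $ j"
  unfolding vvec_axis_shift inner_diagm_add_scaleR inner_diagm_axis by (simp add: axis_def)

lemma fval_axis_shift:
  fixes A :: "real^'m^'n"
  assumes "invertible (Bmat A d)"
  shows "fval A u d (l - (2 * s) *\<^sub>R axis j 1) =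
    fval A u d l - 2 * s * d $ j * (tvec A u d l $ j - vvec u l $ j)
      + s\<^sup>2 * (d $ j)\<^sup>2 * (column j A \<bullet> (matrix_inv (Bmat A d) *v column j A))"
  using inner_diagm_tvec_axis_shift[OF assms, of u l s j] inner_diagm_vvec_axis_shift[of u l s j d]
  by (simp add: fval_def power2_eq_square algebra_simps)

lemma certified_lb_antimono:
  assumes "certified_lb A u l \<Lambda>" and "\<And>i. l' $ i \<le> l $ i"
  shows "certified_lb A u l' \<Lambda>"
  using assms unfolding certified_lb_def by (meson order_trans)

theorem lemma5:
  fixes A :: "real^'m^'n" and u d l :: "real^'m" and \<Lambda> :: "real^'m^'m" and j :: 'm
  assumes unit_cols: "\<forall>i. norm (column i A) = 1"
    and cone: "{A *v w | w. \<forall>i. w $ i \<ge> 0} = UNIV"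
    and dpos: "\<forall>i. d $ i > 0"
    and cert: "certified_lb A u l \<Lambda>"
    and f1: "fval A u d l = 1"
    and jpos: "0 < column j A \<bullet> yvec A u d l - u $ j"
    and jle: "column j A \<bullet> yvec A u d l - u $ j \<le> gam A u d l j"
  defines "l1 \<equiv> l - (2 * (tvec A u d l $ j - vvec u l $ j) / (d $ j * (gam A u d l j)\<^sup>2)) *\<^sub>R axis j 1"
  shows "certified_lb A u l1 \<Lambda>
    \<and> column j A \<bullet> yvec A u d l1 = u $ j
    \<and> fval A u d l1 = 1 - ((column j A \<bullet> yvec A u d l - u $ j) / gam A u d l j)\<^sup>2
    \<and> fval A u d l1 < 1"
proof -
  define a where "a = column j A"
  define w where "w = a \<bullet> yvec A u d l - u $ j"
  define g where "g = a \<bullet> (matrix_inv (Bmat A d) *v a)"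
  define s where "s = w / (d $ j * g)"
  have "surj ((*v) A)"
    using cone unfolding surj_def by blast
  then have inv: "invertible (Bmat A d)"
    by (rule invertible_Bmat[OF dpos])
  have "a \<noteq> 0"
    using unit_cols by (metis a_def norm_zero zero_neq_one)
  then have "g > 0"
    unfolding g_def by (rule inner_matrix_inv_Bmat_pos[OF dpos inv])
  then have gam_sq: "(gam A u d l j)\<^sup>2 = g"
    using f1 by (simp add: gam_def g_def a_def)
  have "d $ j > 0" using dpos by blast
  have "w > 0" using jpos by (simp add: w_def a_def)
  then have "s > 0"
    using \<open>d $ j > 0\<close> \<open>g > 0\<close> by (simp add: s_def)
  have step: "s * d $ j * g = w"
    using \<open>d $ j > 0\<close> \<open>g > 0\<close> by (simp add: s_def)
  have l1: "l1 = l - (2 * s) *\<^sub>R axis j 1"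
    unfolding l1_def tvec_minus_vvec_nth gam_sq by (simp add: s_def w_def a_def)
  have "certified_lb A u l1 \<Lambda>"
    by (rule certified_lb_antimono[OF cert]) (use \<open>s > 0\<close> in \<open>simp add: l1 axis_def\<close>)
  moreover have "a \<bullet> yvec A u d l1 = u $ j"
    using step by (simp add: l1 yvec_axis_shift inner_diff_right w_def g_def a_def)
  moreover have "fval A u d l1 = 1 - w\<^sup>2 / g"
  proof -
    have "fval A u d l1 = 1 - 2 * s * d $ j * w + s\<^sup>2 * (d $ j)\<^sup>2 * g"
      unfolding l1 fval_axis_shift[OF inv] tvec_minus_vvec_nth f1 by (simp add: w_def g_def a_def)
    also have "\<dots> = 1 - w\<^sup>2 / g"
      using \<open>d $ j > 0\<close> \<open>g > 0\<close> by (simp add: s_def field_simps power2_eq_square)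
    finally show ?thesis .
  qed
  moreover have "w\<^sup>2 / g > 0"
    using \<open>w > 0\<close> \<open>g > 0\<close> by simp
  ultimately show ?thesis
    by (simp add: gam_sq power_divide a_def w_def)
qed

end
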